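(* Let $M$ be a retract-compatible Coxeter matrix over a finite set $S$ with $|S|\ge2$, and let $A_S$ be its associated Artin group. Then for every $x\in S$ there exists an ordinary retraction $\psi_x:A_S\to A_{S\setminus\{x\}}$ such that $\psi_x(x)\in S\setminus\{x\}$ (in particular $\psi_x(x)\neq 1$).
   Context: A Coxeter matrix over a finite set $S$ is a matrix $M=(m_{s,t})_{s,t\in S}$ with entries in $\mathbb{N}\cup\{\infty\}$, $m_{s,s}=1$, and $m_{s,t}=m_{t,s}\ge 2$ for $s\neq t$. Write $\Pi(s,t,m)$ for the alternating word $sts\cdots$ of length $m$. The Artin group is $A_S=\langle S\mid \Pi(s,t,m_{s,t})=\Pi(t,s,m_{s,t})$ for $s\neq t$, $m_{s,t}\neq\infty\rangle$. For $X\subseteq S$, $A_X$ is the subgroup generated by $X$. $M$ is retract-compatible if all its entries are finite odd numbers and for every triple $a,b,c\in S$ of pairwise distinct elements, up to permuting $a,b,c$, $m_{a,b}=m_{a,c}$ and $m_{b,c}$ divides $m_{a,b}$. A retraction $\varphi:A_S\to A_X$ (homomorphism restricting to the identity on $A_X$) is ordinary if $\varphi(x)=x$ for all $x\in X$ and $\varphi(y)\in X\cup\{1\}$ for all $y\in S\setminus X$. *)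

theory Defs
  imports "HOL-Algebra.Generated_Groups" "HOL-Library.Extended_Nat"
begin

definition coxeter_matrix :: "'a set \<Rightarrow> ('a \<Rightarrow> 'a \<Rightarrow> enat) \<Rightarrow> bool" where
  "coxeter_matrix S M \<longleftrightarrow>
     (\<forall>s\<in>S. M s s = 1) \<and>
     (\<forall>s\<in>S. \<forall>t\<in>S. s \<noteq> t \<longrightarrow> M s t = M t s \<and> M s t \<ge> 2)"

definition retract_compatible :: "'a set \<Rightarrow> ('a \<Rightarrow> 'a \<Rightarrow> enat) \<Rightarrow> bool" where
  "retract_compatible S M \<longleftrightarrow>
     (\<forall>s\<in>S. \<forall>t\<in>S. \<exists>n. M s t = enat n \<and> odd n) \<and>
     (\<forall>a\<in>S. \<forall>b\<in>S. \<forall>c\<in>S. a \<noteq> b \<and> a \<noteq> c \<and> b \<noteq> c \<longrightarrow>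
        (\<exists>a' b' c'. {a', b', c'} = {a, b, c} \<and>
           M a' b' = M a' c' \<and> the_enat (M b' c') dvd the_enat (M a' b')))"

text \<open>Signed letters: (True, s) is s, (False, s) is s inverse.\<close>
type_synonym 'a word = "(bool \<times> 'a) list"

definition words_on :: "'a set \<Rightarrow> 'a word \<Rightarrow> bool" where
  "words_on S w \<longleftrightarrow> snd ` set w \<subseteq> S"

fun alt_word :: "'a \<Rightarrow> 'a \<Rightarrow> nat \<Rightarrow> 'a word" where
  "alt_word s t 0 = []"
| "alt_word s t (Suc n) = (True, s) # alt_word t s n"

inductive artin_step :: "'a set \<Rightarrow> ('a \<Rightarrow> 'a \<Rightarrow> enat) \<Rightarrow> 'a word \<Rightarrow> 'a word \<Rightarrow> bool"
  for S M where
  cancel: "\<lbrakk>words_on S u; words_on S v; s \<in> S\<rbrakk> \<Longrightarrow>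
     artin_step S M (u @ [(b, s), (\<not> b, s)] @ v) (u @ v)"
| braid: "\<lbrakk>words_on S u; words_on S v; s \<in> S; t \<in> S; s \<noteq> t; M s t = enat m\<rbrakk> \<Longrightarrow>
     artin_step S M (u @ alt_word s t m @ v) (u @ alt_word t s m @ v)"

definition artin_equiv :: "'a set \<Rightarrow> ('a \<Rightarrow> 'a \<Rightarrow> enat) \<Rightarrow> 'a word \<Rightarrow> 'a word \<Rightarrow> bool" where
  "artin_equiv S M = equivclp (artin_step S M)"

definition artin_class :: "'a set \<Rightarrow> ('a \<Rightarrow> 'a \<Rightarrow> enat) \<Rightarrow> 'a word \<Rightarrow> 'a word set" where
  "artin_class S M w = {v. words_on S v \<and> artin_equiv S M w v}"

definition artin_group :: "'a set \<Rightarrow> ('a \<Rightarrow> 'a \<Rightarrow> enat) \<Rightarrow> 'a word set monoid" where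
  "artin_group S M =
     \<lparr> carrier = artin_class S M ` {w. words_on S w},
       mult = (\<lambda>A B. artin_class S M ((SOME u. u \<in> A) @ (SOME v. v \<in> B))),
       one = artin_class S M [] \<rparr>"

definition artin_gen :: "'a set \<Rightarrow> ('a \<Rightarrow> 'a \<Rightarrow> enat) \<Rightarrow> 'a \<Rightarrow> 'a word set" where
  "artin_gen S M s = artin_class S M [(True, s)]"

definition parabolic :: "'a set \<Rightarrow> ('a \<Rightarrow> 'a \<Rightarrow> enat) \<Rightarrow> 'a set \<Rightarrow> 'a word set set" where
  "parabolic S M X = generate (artin_group S M) (artin_gen S M ` X)"

definition retraction :: "'a set \<Rightarrow> ('a \<Rightarrow> 'a \<Rightarrow> enat) \<Rightarrow> 'a set \<Rightarrow> ('a word set \<Rightarrow> 'a word set) \<Rightarrow> bool" where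
  "retraction S M X \<phi> \<longleftrightarrow>
     \<phi> \<in> hom (artin_group S M) (artin_group S M) \<and>
     \<phi> ` carrier (artin_group S M) \<subseteq> parabolic S M X \<and>
     (\<forall>a\<in>parabolic S M X. \<phi> a = a)"

definition ordinary_retraction :: "'a set \<Rightarrow> ('a \<Rightarrow> 'a \<Rightarrow> enat) \<Rightarrow> 'a set \<Rightarrow> ('a word set \<Rightarrow> 'a word set) \<Rightarrow> bool" where
  "ordinary_retraction S M X \<phi> \<longleftrightarrow>
     retraction S M X \<phi> \<and>
     (\<forall>x\<in>X. \<phi> (artin_gen S M x) = artin_gen S M x) \<and>
     (\<forall>y\<in>S - X. \<phi> (artin_gen S M y) \<in> artin_gen S M ` X \<union> {\<one>\<^bsub>artin_group S M\<^esub>})"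

end

theory Submission
  imports Defs
begin

text \<open>Choose \<open>y \<noteq> x\<close> with \<open>m\<^sub>x\<^sub>y\<close> minimal. Retract-compatibility of a triangle
  \<open>{x, y, z}\<close> says that two of its labels agree and the third divides them; minimality of
  \<open>m\<^sub>x\<^sub>y\<close> then forces \<open>m\<^sub>y\<^sub>z\<close> to divide \<open>m\<^sub>x\<^sub>z\<close>. A braid relation of length \<open>k\<close>
  implies the alternating relation of every length divisible by \<open>k\<close>, so the substitution
  \<open>x \<mapsto> y\<close>, fixing all other generators, respects every defining relation of \<open>A\<^sub>S\<close>
  (the one between \<open>x\<close> and \<open>y\<close> becomes trivial) and induces the required retraction.\<close>

lemma words_on_append [simp]: "words_on S (u @ v) \<longleftrightarrow> words_on S u \<and> words_on S v"
  by (auto simp: words_on_def)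

lemma words_on_Cons [simp]: "words_on S (p # w) \<longleftrightarrow> snd p \<in> S \<and> words_on S w"
  by (auto simp: words_on_def)

lemma words_on_Nil [simp]: "words_on S []"
  by (auto simp: words_on_def)

lemma words_on_mono: "words_on X w \<Longrightarrow> X \<subseteq> S \<Longrightarrow> words_on S w"
  by (auto simp: words_on_def)

lemma words_on_alt_word: "s \<in> S \<Longrightarrow> t \<in> S \<Longrightarrow> words_on S (alt_word s t n)"
  by (induction n arbitrary: s t) auto

lemma alt_word_add:
  "alt_word s t (k + n) = alt_word s t k @ (if even k then alt_word s t n else alt_word t s n)"
  by (induction k arbitrary: s t) auto

lemma artin_equiv_refl [simp]: "artin_equiv S M w w"
  by (simp add: artin_equiv_def)

lemma artin_equiv_sym: "artin_equiv S M u v \<Longrightarrow> artin_equiv S M v u"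
  unfolding artin_equiv_def by (rule equivclp_sym)

lemma artin_equiv_trans: "artin_equiv S M u v \<Longrightarrow> artin_equiv S M v w \<Longrightarrow> artin_equiv S M u w"
  unfolding artin_equiv_def by (rule equivclp_trans)

lemma artin_step_imp_artin_equiv: "artin_step S M u v \<Longrightarrow> artin_equiv S M u v"
  unfolding artin_equiv_def by blast

lemma artin_equiv_braid:
  "\<lbrakk>s \<in> S; t \<in> S; s \<noteq> t; M s t = enat m\<rbrakk> \<Longrightarrow>
     artin_equiv S M (alt_word s t m) (alt_word t s m)"
  using artin_step.braid[of S "[]" "[]" s t M m] by (simp add: artin_step_imp_artin_equiv)

lemma artin_step_context:
  "\<lbrakk>artin_step S M a b; words_on S u; words_on S v\<rbrakk> \<Longrightarrow>
     artin_step S M (u @ a @ v) (u @ b @ v)"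
proof (induction rule: artin_step.induct)
  case (cancel u' v' s b)
  then show ?case using artin_step.cancel[of S "u @ u'" "v' @ v" s M b] by simp
next
  case (braid u' v' s t m)
  then show ?case using artin_step.braid[of S "u @ u'" "v' @ v" s t M m] by simp
qed

lemma artin_equiv_context:
  "\<lbrakk>artin_equiv S M a b; words_on S u; words_on S v\<rbrakk> \<Longrightarrow>
     artin_equiv S M (u @ a @ v) (u @ b @ v)"
  unfolding artin_equiv_def
proof (induction rule: equivclp_induct)
  case (step b c)
  then have "artin_step S M (u @ b @ v) (u @ c @ v) \<or> artin_step S M (u @ c @ v) (u @ b @ v)"
    using artin_step_context by blast
  then show ?case using step equivclp_into_equivclp by metis
qed simp

lemma artin_equiv_append:
  "\<lbrakk>artin_equiv S M a a'; artin_equiv S M b b'; words_on S a'; words_on S b\<rbrakk> \<Longrightarrow>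
     artin_equiv S M (a @ b) (a' @ b')"
  using artin_equiv_context[of S M a a' "[]" b] artin_equiv_context[of S M b b' a' "[]"]
    artin_equiv_trans by fastforce

lemma artin_equiv_braid_multiple:
  assumes "s \<in> S" "t \<in> S" "s \<noteq> t" "M s t = enat k" "k dvd m"
  shows "artin_equiv S M (alt_word s t m) (alt_word t s m)"
proof -
  obtain i where m: "m = k * i" using \<open>k dvd m\<close> by (rule dvdE)
  have braid: "artin_equiv S M (alt_word s t k) (alt_word t s k)"
    using assms by (intro artin_equiv_braid)
  have words: "words_on S (alt_word s t n)" "words_on S (alt_word t s n)" for n
    using assms(1,2) by (simp_all add: words_on_alt_word)
  have "artin_equiv S M (alt_word s t (k * i)) (alt_word t s (k * i))"
  proof (induction i)
    case (Suc i)
    show ?case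
    proof (cases "even k")
      case True
      then show ?thesis
        using artin_equiv_append[OF braid Suc words(2,1)] by (simp add: alt_word_add)
    next
      case False
      then show ?thesis
        using artin_equiv_append[OF braid artin_equiv_sym[OF Suc] words(2,2)]
        by (simp add: alt_word_add)
    qed
  qed simp
  then show ?thesis using m by simp
qed

lemma artin_class_eq: "artin_equiv S M u v \<Longrightarrow> artin_class S M u = artin_class S M v"
  unfolding artin_class_def using artin_equiv_sym artin_equiv_trans by blast

lemma artin_class_representative:
  assumes "words_on S w"
  shows "words_on S (SOME v. v \<in> artin_class S M w) \<and>
    artin_equiv S M w (SOME v. v \<in> artin_class S M w)"
proof -
  have "w \<in> artin_class S M w" using assms by (simp add: artin_class_def)
  then have "(SOME v. v \<in> artin_class S M w) \<in> artin_class S M w" by (rule someI)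
  then show ?thesis by (simp add: artin_class_def)
qed

lemma carrier_artin_group: "carrier (artin_group S M) = artin_class S M ` {w. words_on S w}"
  by (simp add: artin_group_def)

lemma one_artin_group: "\<one>\<^bsub>artin_group S M\<^esub> = artin_class S M []"
  by (simp add: artin_group_def)

lemma artin_class_mult:
  assumes "words_on S u" "words_on S v"
  shows "artin_class S M u \<otimes>\<^bsub>artin_group S M\<^esub> artin_class S M v = artin_class S M (u @ v)"
proof -
  define u' where "u' = (SOME w. w \<in> artin_class S M u)"
  define v' where "v' = (SOME w. w \<in> artin_class S M v)"
  have "words_on S u'" "artin_equiv S M u u'"
    using artin_class_representative[OF assms(1)] u'_def by auto
  moreover have "words_on S v'" "artin_equiv S M v v'"
    using artin_class_representative[OF assms(2)] v'_def by auto
  ultimately have "artin_equiv S M (u' @ v') (u @ v)"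
    using artin_equiv_append artin_equiv_sym assms(2) by metis
  then show ?thesis unfolding artin_group_def u'_def v'_def by (simp add: artin_class_eq)
qed

lemma monoid_artin_group: "monoid (artin_group S M)"
  by (rule monoidI)
    (auto simp: carrier_artin_group one_artin_group artin_class_mult)

lemma inv_artin_gen:
  assumes "s \<in> S"
  shows "inv\<^bsub>artin_group S M\<^esub> (artin_gen S M s) = artin_class S M [(False, s)]"
proof -
  have cancel: "artin_class S M [(b, s), (\<not> b, s)] = artin_class S M []" for b
    using artin_step.cancel[of S "[]" "[]" s M b] assms
    by (simp add: artin_class_eq artin_step_imp_artin_equiv)
  show ?thesis
    using cancel[of True] cancel[of False] assms
    by (intro monoid.inv_unique'[OF monoid_artin_group, symmetric])
      (auto simp: carrier_artin_group artin_gen_def artin_class_mult one_artin_group)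
qed

lemma parabolic_subset_artin_classes:
  assumes "X \<subseteq> S"
  shows "parabolic S M X \<subseteq> artin_class S M ` {w. words_on X w}"
proof
  fix a assume "a \<in> parabolic S M X"
  then show "a \<in> artin_class S M ` {w. words_on X w}"
    unfolding parabolic_def
  proof (induction rule: generate.induct)
    case one
    then show ?case by (auto simp: one_artin_group)
  next
    case (incl h)
    then obtain s where "s \<in> X" "h = artin_class S M [(True, s)]" by (auto simp: artin_gen_def)
    then show ?case by (intro image_eqI[of _ _ "[(True, s)]"]) auto
  next
    case (inv h)
    then obtain s where "s \<in> X" "h = artin_gen S M s" by auto
    then show ?case
      using inv_artin_gen[of s S M] assms by (intro image_eqI[of _ _ "[(False, s)]"]) auto
  next
    case (eng h1 h2)
    then obtain u v where "words_on X u" "words_on X v"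
      and "h1 = artin_class S M u" "h2 = artin_class S M v"
      by auto
    then show ?case
      using artin_class_mult[of S u v M] words_on_mono assms
      by (intro image_eqI[of _ _ "u @ v"]) auto
  qed
qed

lemma artin_class_in_parabolic:
  assumes "X \<subseteq> S" "words_on X w"
  shows "artin_class S M w \<in> parabolic S M X"
  using assms(2)
proof (induction w)
  case Nil
  then show ?case
    unfolding parabolic_def using generate.one[of "artin_group S M"] by (simp add: one_artin_group)
next
  case (Cons p w)
  obtain b s where p: "p = (b, s)" by (cases p)
  with Cons.prems assms(1) have "s \<in> X" "s \<in> S" "words_on S w" by (auto intro: words_on_mono)
  have letter: "artin_class S M [(b, s)] \<in> parabolic S M X"
  proof (cases b)
    case True
    have "artin_gen S M s \<in> parabolic S M X"
      unfolding parabolic_def using \<open>s \<in> X\<close> by (auto intro: generate.incl)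
    then show ?thesis using True by (simp add: artin_gen_def)
  next
    case False
    have "inv\<^bsub>artin_group S M\<^esub> (artin_gen S M s) \<in> parabolic S M X"
      unfolding parabolic_def using \<open>s \<in> X\<close> by (auto intro: generate.inv)
    then show ?thesis using inv_artin_gen[OF \<open>s \<in> S\<close>] False by simp
  qed
  have "artin_class S M (p # w) =
      artin_class S M [(b, s)] \<otimes>\<^bsub>artin_group S M\<^esub> artin_class S M w"
    using artin_class_mult[of S "[(b, s)]" w M] \<open>s \<in> S\<close> \<open>words_on S w\<close> p by simp
  then show ?case
    using letter Cons unfolding parabolic_def by (simp add: generate.eng)
qed

definition map_letters :: "('a \<Rightarrow> 'a) \<Rightarrow> 'a word \<Rightarrow> 'a word" where
  "map_letters f = map (apsnd f)"

lemma map_letters_simps [simp]: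
  "map_letters f [] = []"
  "map_letters f ((b, s) # w) = (b, f s) # map_letters f w"
  "map_letters f (u @ v) = map_letters f u @ map_letters f v"
  by (simp_all add: map_letters_def)

lemma map_letters_alt_word: "map_letters f (alt_word s t n) = alt_word (f s) (f t) n"
  by (induction n arbitrary: s t) auto

lemma words_on_map_letters: "words_on S w \<Longrightarrow> f ` S \<subseteq> T \<Longrightarrow> words_on T (map_letters f w)"
  by (auto simp: words_on_def map_letters_def image_subset_iff)

lemma map_letters_fixed: "words_on X w \<Longrightarrow> \<forall>s\<in>X. f s = s \<Longrightarrow> map_letters f w = w"
  by (induction w) auto

definition preserves_braid_relations ::
    "'a set \<Rightarrow> ('a \<Rightarrow> 'a \<Rightarrow> enat) \<Rightarrow> ('a \<Rightarrow> 'a) \<Rightarrow> bool" where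
  "preserves_braid_relations S M f \<longleftrightarrow>
     (\<forall>s\<in>S. \<forall>t\<in>S. \<forall>m. s \<noteq> t \<longrightarrow> M s t = enat m \<longrightarrow>
        artin_equiv S M (alt_word (f s) (f t) m) (alt_word (f t) (f s) m))"

lemma artin_equiv_map_letters:
  assumes f: "f ` S \<subseteq> S" "preserves_braid_relations S M f"
    and "artin_equiv S M u v"
  shows "artin_equiv S M (map_letters f u) (map_letters f v)"
proof -
  have map_step: "artin_equiv S M (map_letters f u) (map_letters f v)"
    if "artin_step S M u v" for u v
    using that
  proof (induction rule: artin_step.induct)
    case (cancel u v s b)
    then show ?case
      using artin_step.cancel[of S "map_letters f u" "map_letters f v" "f s" M b] f(1)
      by (auto simp: words_on_map_letters intro: artin_step_imp_artin_equiv)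
  next
    case (braid u v s t m)
    then show ?case
      using artin_equiv_context[of S M "alt_word (f s) (f t) m" "alt_word (f t) (f s) m"
          "map_letters f u" "map_letters f v"] f
      by (auto simp: preserves_braid_relations_def map_letters_alt_word words_on_map_letters)
  qed
  show ?thesis
    using \<open>artin_equiv S M u v\<close> unfolding artin_equiv_def
  proof (induction rule: equivclp_induct)
    case (step v w)
    then show ?case
      using map_step artin_equiv_sym artin_equiv_trans unfolding artin_equiv_def by metis
  qed simp
qed

definition artin_map_letters ::
    "'a set \<Rightarrow> ('a \<Rightarrow> 'a \<Rightarrow> enat) \<Rightarrow> ('a \<Rightarrow> 'a) \<Rightarrow> 'a word set \<Rightarrow> 'a word set" where
  "artin_map_letters S M f A = artin_class S M (map_letters f (SOME w. w \<in> A))"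

lemma artin_map_letters_class:
  assumes "f ` S \<subseteq> S" "preserves_braid_relations S M f" "words_on S w"
  shows "artin_map_letters S M f (artin_class S M w) = artin_class S M (map_letters f w)"
  using artin_class_representative[OF assms(3)] artin_equiv_map_letters[OF assms(1,2)]
  unfolding artin_map_letters_def by (metis artin_class_eq)

lemma artin_map_letters_hom:
  assumes "f ` S \<subseteq> S" "preserves_braid_relations S M f"
  shows "artin_map_letters S M f \<in> hom (artin_group S M) (artin_group S M)"
proof (rule homI)
  fix A assume "A \<in> carrier (artin_group S M)"
  then show "artin_map_letters S M f A \<in> carrier (artin_group S M)"
    using assms by (auto simp: carrier_artin_group artin_map_letters_class words_on_map_letters)
next
  fix A B assume "A \<in> carrier (artin_group S M)" "B \<in> carrier (artin_group S M)"
  then obtain u v where "words_on S u" "words_on S v"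
    and "A = artin_class S M u" "B = artin_class S M v"
    by (auto simp: carrier_artin_group)
  then show "artin_map_letters S M f (A \<otimes>\<^bsub>artin_group S M\<^esub> B) =
      artin_map_letters S M f A \<otimes>\<^bsub>artin_group S M\<^esub> artin_map_letters S M f B"
    using assms by (simp add: artin_class_mult artin_map_letters_class words_on_map_letters)
qed

lemma artin_map_letters_gen:
  assumes "f ` S \<subseteq> S" "preserves_braid_relations S M f" "s \<in> S"
  shows "artin_map_letters S M f (artin_gen S M s) = artin_gen S M (f s)"
  using artin_map_letters_class[OF assms(1,2), of "[(True, s)]"] assms(3)
  by (simp add: artin_gen_def)

lemma ordinary_retraction_artin_map_letters:
  assumes "X \<subseteq> S" "f ` S \<subseteq> X" "\<forall>s\<in>X. f s = s" "preserves_braid_relations S M f"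
  shows "ordinary_retraction S M X (artin_map_letters S M f)"
proof -
  have fS: "f ` S \<subseteq> S" using assms(1,2) by blast
  have "artin_map_letters S M f ` carrier (artin_group S M) \<subseteq> parabolic S M X"
    by (auto simp: carrier_artin_group artin_map_letters_class[OF fS assms(4)]
        intro!: artin_class_in_parabolic[OF assms(1)] words_on_map_letters[OF _ assms(2)])
  moreover have "artin_map_letters S M f a = a" if a: "a \<in> parabolic S M X" for a
  proof -
    obtain w where w: "words_on X w" "a = artin_class S M w"
      using parabolic_subset_artin_classes[OF assms(1)] a by blast
    have "words_on S w" using w(1) assms(1) by (rule words_on_mono)
    then show ?thesis
      using w assms(3) by (simp add: artin_map_letters_class[OF fS assms(4)] map_letters_fixed)
  qed
  ultimately show ?thesis
    using artin_map_letters_hom[OF fS assms(4)] artin_map_letters_gen[OF fS assms(4)] assms(1-3)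
    unfolding ordinary_retraction_def retraction_def by auto
qed

lemma coxeter_matrix_sym: "\<lbrakk>coxeter_matrix S M; s \<in> S; t \<in> S\<rbrakk> \<Longrightarrow> M s t = M t s"
  unfolding coxeter_matrix_def by (cases "s = t") auto

lemma preserves_braid_relations_collapse:
  assumes "coxeter_matrix S M" "x \<in> S" "y \<in> S"
    and dvd: "\<forall>z\<in>S - {x, y}. \<exists>k m. M y z = enat k \<and> M x z = enat m \<and> k dvd m"
  shows "preserves_braid_relations S M (id(x := y))"
  unfolding preserves_braid_relations_def
proof (intro ballI allI impI)
  have collapse: "artin_equiv S M (alt_word y z m) (alt_word z y m)"
    if z: "z \<in> S" "z \<noteq> x" and m: "M x z = enat m" for z m
  proof (cases "z = y")
    case False
    with dvd z obtain k m' where "M y z = enat k" "M x z = enat m'" "k dvd m'" by blast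
    with m have "M y z = enat k" "k dvd m" by simp_all
    then show ?thesis using False z(1) assms(3) by (intro artin_equiv_braid_multiple) auto
  qed simp
  fix s t m assume st: "s \<in> S" "t \<in> S" "s \<noteq> t" and m: "M s t = enat m"
  have m': "M t s = enat m" using m coxeter_matrix_sym[OF assms(1) st(1,2)] by simp
  show "artin_equiv S M (alt_word ((id(x := y)) s) ((id(x := y)) t) m)
      (alt_word ((id(x := y)) t) ((id(x := y)) s) m)"
  proof (cases "s = x")
    case True
    with st collapse[OF st(2) _ m[unfolded True]] show ?thesis by simp
  next
    case False
    show ?thesis
    proof (cases "t = x")
      case True
      with st False collapse[OF st(1) False m'[unfolded True]] show ?thesis
        by (simp add: artin_equiv_sym)
    next
      case False
      with \<open>s \<noteq> x\<close> st m show ?thesis by (simp add: artin_equiv_braid)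
    qed
  qed
qed

lemma retract_compatible_enat:
  assumes "retract_compatible S M" "s \<in> S" "t \<in> S"
  obtains n where "M s t = enat n" "0 < n"
proof -
  obtain n where "M s t = enat n" "odd n"
    using assms unfolding retract_compatible_def by blast
  then show ?thesis using that odd_pos by blast
qed

lemma retract_compatible_triangle:
  assumes cm: "coxeter_matrix S M" and rc: "retract_compatible S M"
    and S: "x \<in> S" "y \<in> S" "z \<in> S" and distinct: "x \<noteq> y" "x \<noteq> z" "y \<noteq> z"
    and le: "the_enat (M x y) \<le> the_enat (M x z)"
  shows "the_enat (M y z) dvd the_enat (M x z)"
proof -
  define m where "m p q = the_enat (M p q)" for p q
  have "\<exists>a b c. {a, b, c} = {x, y, z} \<and> M a b = M a c \<and> the_enat (M b c) dvd the_enat (M a b)"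
    using rc S distinct unfolding retract_compatible_def by simp
  then obtain a b c where abc: "{a, b, c} = {x, y, z}" "m a b = m a c" "m b c dvd m a b"
    unfolding m_def by auto
  have sym: "m y x = m x y" "m z x = m x z" "m z y = m y z"
    using coxeter_matrix_sym[OF cm] S unfolding m_def by metis+
  from abc(1) have "a \<in> {x, y, z}" "b \<in> {x, y, z}" "c \<in> {x, y, z}"
    "x \<in> {a, b, c}" "y \<in> {a, b, c}" "z \<in> {a, b, c}"
    by blast+
  then have "(m x y = m x z \<and> m y z dvd m x y) \<or> (m x y = m y z \<and> m x z dvd m x y)
      \<or> (m x z = m y z \<and> m x y dvd m x z)"
    using abc(2,3) sym distinct by auto
  moreover have "0 < m x y"
    using retract_compatible_enat[OF rc S(1,2)] unfolding m_def by (metis the_enat.simps)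
  ultimately show ?thesis using le dvd_imp_le unfolding m_def by fastforce
qed

lemma retract_compatible_dividing_neighbour:
  assumes cm: "coxeter_matrix S M" and rc: "retract_compatible S M"
    and "x \<in> S" "S - {x} \<noteq> {}"
  obtains y where "y \<in> S - {x}"
    "\<forall>z\<in>S - {x, y}. \<exists>k m. M y z = enat k \<and> M x z = enat m \<and> k dvd m"
proof -
  obtain y where y: "y \<in> S - {x}"
    and least: "\<And>z. z \<in> S - {x} \<Longrightarrow> the_enat (M x y) \<le> the_enat (M x z)"
    using ex_has_least_nat[of "\<lambda>z. z \<in> S - {x}" _ "\<lambda>z. the_enat (M x z)"] assms(4) by blast
  have "\<exists>k m. M y z = enat k \<and> M x z = enat m \<and> k dvd m" if z: "z \<in> S - {x, y}" for z
  proof -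
    obtain k m where "M y z = enat k" "M x z = enat m"
      using retract_compatible_enat[OF rc] y z \<open>x \<in> S\<close> by (metis DiffD1)
    moreover have "the_enat (M y z) dvd the_enat (M x z)"
      using retract_compatible_triangle[OF cm rc] least y z \<open>x \<in> S\<close> by blast
    ultimately show ?thesis by auto
  qed
  then show ?thesis using that y by blast
qed

theorem lemma3p9:
  fixes S :: "'a set" and M :: "'a \<Rightarrow> 'a \<Rightarrow> enat" and x :: 'a
  assumes "finite S" and "card S \<ge> 2"
    and "coxeter_matrix S M" and "retract_compatible S M"
    and "x \<in> S"
  shows "\<exists>\<psi>. ordinary_retraction S M (S - {x}) \<psi> \<and>
             \<psi> (artin_gen S M x) \<in> artin_gen S M ` (S - {x})"
proof -
  have "S - {x} \<noteq> {}"
  proof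
    assume "S - {x} = {}"
    then have "card S \<le> card {x}" by (intro card_mono) auto
    then show False using \<open>card S \<ge> 2\<close> by simp
  qed
  then obtain y where y: "y \<in> S - {x}"
    and dvd: "\<forall>z\<in>S - {x, y}. \<exists>k m. M y z = enat k \<and> M x z = enat m \<and> k dvd m"
    using retract_compatible_dividing_neighbour[OF assms(3,4,5)] by blast
  let ?f = "id(x := y)"
  have "preserves_braid_relations S M ?f"
    using assms(3,5) y dvd by (intro preserves_braid_relations_collapse) auto
  then have "ordinary_retraction S M (S - {x}) (artin_map_letters S M ?f)"
    using y by (intro ordinary_retraction_artin_map_letters) auto
  moreover have "artin_map_letters S M ?f (artin_gen S M x) = artin_gen S M y"
    using artin_map_letters_gen[OF _ \<open>preserves_braid_relations S M ?f\<close>] y assms(5) by auto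
  ultimately show ?thesis
    using y by (intro exI[of _ "artin_map_letters S M ?f"]) auto
qed

end
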